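(* Let $n \geq 2$, $b \geq 2$ and $B$ be positive integers, let $L := \lceil \log_2 n \rceil$ and $T := bB$, and assume $$B \geq \frac{n}{b} L \qquad\text{and}\qquad B \geq 4L .$$ Define $s_0 := n$ and $s_{r+1} := \lceil s_r/2 \rceil$ for $r \geq 0$, and for each $r \geq 0$ let $J_r := \left\lfloor \frac{T}{s_r L} \right\rfloor$. Then for every integer $r$ with $0 \leq r < L - 1$ and every integer $z$ with $0 \leq z < b$, $$s_{r+1} - \left\lceil \frac{b - z}{J_{r+1}} \right\rceil \;\geq\; \left\lceil \frac{z}{J_r} \right\rceil .$$
   Context: $\lceil\cdot\rceil$ and $\lfloor\cdot\rfloor$ denote the ceiling and floor functions. In the paper, $s_r$ is the number of surviving candidate arms in round $r$ of Sequential Halving with $n$ arms and total budget $T$, and $J_r$ is the number of pulls of each surviving arm in round $r$; the inequality expresses that when a batch of size $b$ spans rounds $r$ and $r+1$ (with $z$ pulls in round $r$), no incorrect promotion occurs. The hypotheses guarantee $J_r \ge 1$ for all relevant $r$. *)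

theory Defs
  imports Complex_Main
begin

text \<open>Sequential Halving: number of surviving arms, s_0 = n, s_(r+1) = ceil(s_r / 2).\<close>
fun sh_s :: "nat \<Rightarrow> nat \<Rightarrow> nat" where
  "sh_s n 0 = n"
| "sh_s n (Suc r) = nat \<lceil>real (sh_s n r) / 2\<rceil>"

definition sh_L :: "nat \<Rightarrow> nat" where
  "sh_L n = nat \<lceil>log 2 (real n)\<rceil>"

definition sh_J :: "nat \<Rightarrow> nat \<Rightarrow> nat \<Rightarrow> int" where
  "sh_J n T r = \<lfloor>real T / (real (sh_s n r) * real (sh_L n))\<rfloor>"

end

theory Submission
  imports Defs
begin

text \<open>
  Put \<open>y = T / L\<close>, \<open>s' = s\<^sub>r\<close> and \<open>s = s\<^sub>r\<^sub>+\<^sub>1\<close>, so that \<open>J\<^sub>r = \<lfloor>y / s'\<rfloor>\<close>,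
  \<open>J\<^sub>r\<^sub>+\<^sub>1 = \<lfloor>y / s\<rfloor>\<close> and \<open>s \<le> s' \<le> 2 s\<close>. The hypotheses on \<open>B\<close> give \<open>y \<ge> n \<ge> s'\<close>
  and \<open>y \<ge> 4 b\<close>, and \<open>r + 1 < L\<close> gives \<open>s \<ge> 2\<close>. With \<open>m = \<lfloor>y / (2 s)\<rfloor>\<close> we have
  \<open>J\<^sub>r \<ge> m\<close>, \<open>J\<^sub>r\<^sub>+\<^sub>1 \<ge> 2 m\<close> and \<open>s (m + 1) > y / 2 \<ge> 2 b\<close>. If \<open>m = 0\<close> then \<open>b < s\<close>
  and both ceilings are bounded by their numerators. Otherwise the two ceilings
  \<open>p = \<lceil>z / m\<rceil>\<close>, \<open>q = \<lceil>(b - z) / (2 m)\<rceil>\<close> satisfy \<open>(p - 1) m \<le> z - 1\<close> and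
  \<open>(q - 1) 2 m \<le> b - z - 1\<close>, so \<open>2 m (p + q - 2) \<le> 2 b - 4 < s (m + 1) - 4\<close>; were
  \<open>p + q > s\<close>, this would force \<open>(m - 1)(s - 2) < -2\<close>.
\<close>

lemma ceiling_divide_antimono:
  fixes x k k' :: real
  assumes "0 \<le> x" "0 < k" "k \<le> k'"
  shows "\<lceil>x / k'\<rceil> \<le> \<lceil>x / k\<rceil>"
  using assms by (intro ceiling_mono divide_left_mono) auto

lemma ceiling_divide_pred_mult_le:
  fixes a k :: int
  assumes "1 \<le> k"
  shows "(\<lceil>of_int a / of_int k :: real\<rceil> - 1) * k \<le> a - 1"
proof -
  have "of_int (\<lceil>of_int a / of_int k :: real\<rceil> - 1) < (of_int a / of_int k :: real)"
    by linarith
  then have "of_int ((\<lceil>of_int a / of_int k :: real\<rceil> - 1) * k) < (of_int a :: real)"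
    using assms by (simp add: pos_less_divide_eq)
  then show ?thesis
    by linarith
qed

lemma ceiling_divide_add_ceiling_divide_double_le:
  fixes a c k s :: int
  assumes "1 \<le> k" "0 \<le> a" "1 \<le> c" "2 \<le> s" "2 * (a + c) < s * (k + 1)"
  shows "\<lceil>of_int a / of_int k :: real\<rceil> + \<lceil>of_int c / of_int (2 * k) :: real\<rceil> \<le> s"
proof (rule ccontr)
  define p where "p = \<lceil>of_int a / of_int k :: real\<rceil>"
  define q where "q = \<lceil>of_int c / of_int (2 * k) :: real\<rceil>"
  assume "\<not> p + q \<le> s"
  then have "2 * k * (s - 1) \<le> 2 * k * (p + q - 2)"
    using assms(1) by (intro mult_left_mono) auto
  moreover have "(p - 1) * k \<le> a - 1"
    unfolding p_def using assms(1) by (rule ceiling_divide_pred_mult_le)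
  moreover have "(q - 1) * (2 * k) \<le> c - 1"
    unfolding q_def using assms(1) by (intro ceiling_divide_pred_mult_le) simp
  moreover have "0 \<le> (k - 1) * (s - 2)"
    using assms by simp
  ultimately show False
    using assms by (simp add: algebra_simps)
qed

lemma ceiling_split_budget_le:
  fixes y :: real and s s' b z :: nat
  assumes "2 \<le> s" "s \<le> s'" "s' \<le> 2 * s" "s' \<le> y" "4 * b \<le> y" "z < b"
  shows "\<lceil>real z / of_int \<lfloor>y / s'\<rfloor>\<rceil> + \<lceil>(real b - real z) / of_int \<lfloor>y / s\<rfloor>\<rceil> \<le> int s"
proof -
  define k where "k = \<lfloor>y / s'\<rfloor>"
  define J where "J = \<lfloor>y / s\<rfloor>"
  define m where "m = \<lfloor>y / (2 * s)\<rfloor>"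
  have "y / s' \<le> y / s"
    using assms by (intro divide_left_mono) auto
  then have "k \<le> J"
    unfolding k_def J_def by (rule floor_mono)
  have "1 \<le> y / s'"
    using assms by simp
  then have "1 \<le> k"
    unfolding k_def by simp
  have "y / (2 * s) \<le> y / s'"
    using assms by (intro divide_left_mono) auto
  then have "m \<le> k"
    unfolding m_def k_def by (rule floor_mono)
  have "of_int (2 * m) \<le> 2 * (y / (2 * s))"
    unfolding m_def by linarith
  then have "2 * m \<le> J"
    using assms(1) unfolding J_def by (simp add: le_floor_iff)
  have "y / (2 * s) < of_int m + 1"
    unfolding m_def by linarith
  then have "y < 2 * s * (of_int m + 1)"
    using assms(1) by (simp add: field_simps)
  then have "of_int (2 * int b) < (of_int (int s * (m + 1)) :: real)"
    using assms(5) by simp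
  then have budget: "2 * int b < int s * (m + 1)"
    by (simp only: of_int_less_iff)
  show ?thesis
  proof (cases "1 \<le> m")
    case True
    have "\<lceil>real z / of_int k\<rceil> \<le> \<lceil>real z / of_int m\<rceil>"
      using True \<open>m \<le> k\<close> by (intro ceiling_divide_antimono) auto
    moreover have "\<lceil>(real b - real z) / of_int J\<rceil> \<le> \<lceil>(real b - real z) / of_int (2 * m)\<rceil>"
      using True \<open>2 * m \<le> J\<close> assms(6) by (intro ceiling_divide_antimono) auto
    moreover have "\<lceil>of_int (int z) / of_int m :: real\<rceil>
        + \<lceil>of_int (int b - int z) / of_int (2 * m) :: real\<rceil> \<le> int s"
      using True assms(1,6) budget by (intro ceiling_divide_add_ceiling_divide_double_le) auto
    ultimately show ?thesis
      unfolding k_def J_def by simp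
  next
    case False
    moreover have "0 \<le> m"
      unfolding m_def using assms(4,5) by simp
    ultimately have "m = 0"
      by simp
    then have "b < s"
      using budget by simp
    have "\<lceil>real z / of_int k\<rceil> \<le> \<lceil>real z / 1\<rceil>"
      using \<open>1 \<le> k\<close> by (intro ceiling_divide_antimono) auto
    moreover have "\<lceil>(real b - real z) / of_int J\<rceil> \<le> \<lceil>(real b - real z) / 1\<rceil>"
      using \<open>1 \<le> k\<close> \<open>k \<le> J\<close> assms(6) by (intro ceiling_divide_antimono) auto
    moreover have "\<lceil>real b - real z\<rceil> = int b - int z"
      by (metis ceiling_of_int of_int_diff of_int_of_nat_eq)
    ultimately show ?thesis
      unfolding k_def J_def using \<open>b < s\<close> by simp
  qed
qed

lemma sh_s_ge_divide_power: "real n / 2 ^ m \<le> real (sh_s n m)"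
proof (induction m)
  case (Suc m)
  then have "real n / 2 ^ Suc m \<le> real (sh_s n m) / 2"
    by (simp add: divide_right_mono)
  also have "\<dots> \<le> real (sh_s n (Suc m))"
    by simp
  finally show ?case .
qed simp

lemma sh_s_Suc_le: "sh_s n (Suc r) \<le> sh_s n r"
  by simp

lemma sh_s_le_double_Suc: "sh_s n r \<le> 2 * sh_s n (Suc r)"
  by simp linarith

lemma sh_s_le: "sh_s n r \<le> n"
  by (induction r) (use sh_s_Suc_le le_trans in auto)

lemma sh_s_ge_2:
  assumes "0 < n" "m < sh_L n"
  shows "2 \<le> sh_s n m"
proof -
  have "\<not> log 2 (real n) \<le> real m"
    using assms(2) unfolding sh_L_def by linarith
  then have "2 ^ m < n"
    using assms(1) log2_of_power_le by (metis not_le)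
  then have "1 < real n / 2 ^ m"
    by (simp add: field_simps flip: of_nat_less_iff)
  then show ?thesis
    using sh_s_ge_divide_power[of n m] by linarith
qed

lemma sh_J_eq_floor: "sh_J n T r = \<lfloor>(real T / sh_L n) / sh_s n r\<rfloor>"
  unfolding sh_J_def by (simp add: mult.commute)

theorem mainTheorem2:
  fixes n b B :: nat
  assumes "n \<ge> 2" and "b \<ge> 2" and "B \<ge> 1"
    and "real B \<ge> real n / real b * real (sh_L n)"
    and "real B \<ge> 4 * real (sh_L n)"
  shows "\<forall>r z. r + 1 < sh_L n \<and> z < b \<longrightarrow>
           int (sh_s n (r + 1)) - \<lceil>(real b - real z) / real_of_int (sh_J n (b * B) (r + 1))\<rceil>
             \<ge> \<lceil>real z / real_of_int (sh_J n (b * B) r)\<rceil>"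
proof (intro allI impI)
  fix r z
  assume rz: "r + 1 < sh_L n \<and> z < b"
  define y where "y = real (b * B) / sh_L n"
  have "0 < real (sh_L n)"
    using rz by simp
  then have "real n \<le> y" "4 * real b \<le> y"
    using assms(2,4,5) unfolding y_def by (simp_all add: field_simps)
  moreover have "2 \<le> sh_s n (Suc r)"
    using assms(1) rz by (intro sh_s_ge_2) auto
  ultimately have "\<lceil>real z / of_int \<lfloor>y / sh_s n r\<rfloor>\<rceil>
      + \<lceil>(real b - real z) / of_int \<lfloor>y / sh_s n (Suc r)\<rfloor>\<rceil> \<le> int (sh_s n (Suc r))"
    using sh_s_Suc_le sh_s_le_double_Suc sh_s_le[of n r] rz
    by (intro ceiling_split_budget_le) auto
  then show "int (sh_s n (r + 1)) - \<lceil>(real b - real z) / real_of_int (sh_J n (b * B) (r + 1))\<rceil>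
      \<ge> \<lceil>real z / real_of_int (sh_J n (b * B) r)\<rceil>"
    unfolding sh_J_eq_floor y_def by simp
qed

end
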